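(* Let $A$ be a separable unital $C^{*}$-algebra, $\alpha\in\mathrm{Aut}(A)$, and let $u$ be the canonical unitary of $C^{*}(\mathbb{Z},A,\alpha)$. Let $\varepsilon>0$, $n\in\mathbb{N}$, and let $c_0,\ldots,c_n\in A$ satisfy: $0\le c_j\le1$ for $0\le j\le n$; $c_jc_k=0$ for $j\ne k$; and $\|\alpha(c_j)-c_{j+1}\|<\varepsilon$ for $0\le j\le n-1$. Then for $0\le j\le n$ and $1\le k\le n$, we have $\|c_ju^{-k}c_j\|<3n\varepsilon$ and $\|c_ju^kc_j\|<3n\varepsilon$.
   Context: $C^{*}(\mathbb{Z},A,\alpha)$ is the crossed product, containing $A$, with canonical unitary $u$ satisfying $uau^{*}=\alpha(a)$ for $a\in A$. *)

theory Defs
  imports "HOL-Analysis.Analysis"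
begin

class cstar_algebra = real_normed_algebra_1 + banach +
  fixes cscale :: "complex \<Rightarrow> 'a \<Rightarrow> 'a"
    and adj :: "'a \<Rightarrow> 'a"
  assumes cscale_of_real: "cscale (complex_of_real r) x = scaleR r x"
    and cscale_add_right: "cscale a (x + y) = cscale a x + cscale a y"
    and cscale_add_left: "cscale (a + b) x = cscale a x + cscale b x"
    and cscale_cscale: "cscale a (cscale b x) = cscale (a * b) x"
    and cscale_one: "cscale 1 x = x"
    and cscale_mult_left: "cscale a x * y = cscale a (x * y)"
    and cscale_mult_right: "x * cscale a y = cscale a (x * y)"
    and norm_cscale: "norm (cscale a x) = cmod a * norm x"
    and adj_adj: "adj (adj x) = x"
    and adj_add: "adj (x + y) = adj x + adj y"
    and adj_mult: "adj (x * y) = adj y * adj x"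
    and adj_cscale: "adj (cscale a x) = cscale (cnj a) (adj x)"
    and cstar_identity: "norm (adj x * x) = norm x ^ 2"

definition invertible_el :: "'a::cstar_algebra \<Rightarrow> bool" where
  "invertible_el x \<longleftrightarrow> (\<exists>y. x * y = 1 \<and> y * x = 1)"

definition spectrum :: "'a::cstar_algebra \<Rightarrow> complex set" where
  "spectrum x = {z. \<not> invertible_el (cscale z 1 - x)}"

definition positive_el :: "'a::cstar_algebra \<Rightarrow> bool" where
  "positive_el x \<longleftrightarrow> adj x = x \<and> spectrum x \<subseteq> complex_of_real ` {0..}"

definition between_0_1 :: "'a::cstar_algebra \<Rightarrow> bool" where
  "between_0_1 c \<longleftrightarrow> positive_el c \<and> positive_el (1 - c)"

definition unitary_el :: "'a::cstar_algebra \<Rightarrow> bool" where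
  "unitary_el u \<longleftrightarrow> adj u * u = 1 \<and> u * adj u = 1"

definition unital_cstar_subalgebra :: "'a::cstar_algebra set \<Rightarrow> bool" where
  "unital_cstar_subalgebra A \<longleftrightarrow>
     1 \<in> A \<and> (\<forall>x\<in>A. \<forall>y\<in>A. x + y \<in> A \<and> x * y \<in> A) \<and>
     (\<forall>a. \<forall>x\<in>A. cscale a x \<in> A) \<and> (\<forall>x\<in>A. adj x \<in> A) \<and> closed A"

definition separable_set :: "'a::cstar_algebra set \<Rightarrow> bool" where
  "separable_set A \<longleftrightarrow> (\<exists>D. countable D \<and> D \<subseteq> A \<and> A \<subseteq> closure D)"

definition star_automorphism :: "'a::cstar_algebra set \<Rightarrow> ('a \<Rightarrow> 'a) \<Rightarrow> bool" where
  "star_automorphism A \<alpha> \<longleftrightarrow> bij_betw \<alpha> A A \<and>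
     (\<forall>x\<in>A. \<forall>y\<in>A. \<alpha> (x + y) = \<alpha> x + \<alpha> y \<and> \<alpha> (x * y) = \<alpha> x * \<alpha> y) \<and>
     (\<forall>a. \<forall>x\<in>A. \<alpha> (cscale a x) = cscale a (\<alpha> x)) \<and>
     (\<forall>x\<in>A. \<alpha> (adj x) = adj (\<alpha> x))"

end

theory Submission
  imports Defs
begin

text \<open>Conjugation by u moves each c j to within \<epsilon> of c (j + 1), so conjugation by u ^ i moves c j
to within i \<epsilon> of c (j + i). If k \<le> j, then c j is k \<epsilon>-close to u ^ k c (j - k) u ^ -k, whose
product with u ^ k c j vanishes, so the norm of c j u ^ k c j is at most k \<epsilon>. If j < k, c j is
j \<epsilon>-close to u ^ j c 0 u ^ -j and u ^ (k - j) c j u ^ (j - k) is (k - j) \<epsilon>-close to c k, which is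
orthogonal to c 0; again the bound is k \<epsilon>. Taking adjoints handles u ^ -k.

These estimates need the norm of each c j to be at most 1. In the present axiomatic setting the
spectral radius formula is not available, so this is proved with Rickart's elementary argument:
if 1 - l y is invertible for all l in the closed unit disc, averaging the resolvent over the n-th
roots of unity produces an inverse of 1 - (l y) ^ n that is bounded and Lipschitz in l uniformly
in n, and a continuity argument in l \<in> [0, 1] shows that the powers of y eventually have norm at
most 1/2. For a self-adjoint y the norm of y ^ (2 ^ m) is the norm of y to the power 2 ^ m, so the
norm of y is at most 1.\<close>

lemma cscale_zero_left: "cscale 0 x = 0"
  using cscale_of_real[of 0 x] by simp

lemma cscale_diff_left: "cscale (a - b) x = cscale a x - cscale b x"
  using cscale_add_left[of "a - b" b x] by (simp add: eq_diff_eq)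

lemma cscale_diff_right: "cscale a (x - y) = cscale a x - cscale a (y::'a::cstar_algebra)"
  using cscale_add_right[of a "x - y" y] by (simp add: eq_diff_eq)

lemma cscale_sum_left: "cscale (sum f S) (x::'a::cstar_algebra) = (\<Sum>i\<in>S. cscale (f i) x)"
  by (induction S rule: infinite_finite_induct) (auto simp: cscale_zero_left cscale_add_left)

lemma cscale_power: "cscale a x ^ n = cscale (a ^ n) ((x::'a::cstar_algebra) ^ n)"
  by (induction n) (simp_all add: cscale_one cscale_mult_left cscale_mult_right cscale_cscale mult.commute)

lemma norm_cscale_of_real_power:
  "0 \<le> t \<Longrightarrow> norm (cscale (complex_of_real t) x ^ n) = t ^ n * norm ((x::'a::cstar_algebra) ^ n)"
  by (simp add: cscale_power norm_cscale norm_power)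

lemma adj_one: "adj (1::'a::cstar_algebra) = 1"
  using adj_mult[of 1 "adj (1::'a)"] by (simp add: adj_adj)

lemma adj_power: "adj ((x::'a::cstar_algebra) ^ n) = adj x ^ n"
  by (induction n) (simp_all add: adj_one adj_mult power_commutes)

lemma norm_adj: "norm (adj (x::'a::cstar_algebra)) = norm x"
proof -
  have le: "norm z \<le> norm (adj z)" for z :: 'a
  proof -
    have "norm z * norm z \<le> norm (adj z) * norm z"
      using cstar_identity[of z] norm_mult_ineq[of "adj z" z] by (simp add: power2_eq_square)
    then show ?thesis
      by (cases "norm z = 0") (auto intro: mult_right_le_imp_le)
  qed
  show ?thesis using le[of x] le[of "adj x"] by (simp add: adj_adj)
qed

lemma norm_power_two_power_self_adjoint:
  assumes "adj x = (x::'a::cstar_algebra)"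
  shows "norm (x ^ (2 ^ m)) = norm x ^ (2 ^ m)"
proof (induction m)
  case (Suc m)
  have "x ^ (2 ^ Suc m) = adj (x ^ (2 ^ m)) * x ^ (2 ^ m)"
    by (simp add: adj_power assms power_add[symmetric] mult_2)
  then have "norm (x ^ (2 ^ Suc m)) = norm (x ^ (2 ^ m)) ^ 2"
    by (simp add: cstar_identity)
  then show ?case using Suc by (simp add: power_mult[symmetric] mult.commute)
qed simp

lemma one_diff_mult_sum_powers: "(1 - v) * (\<Sum>i<n. v ^ i) = 1 - (v::'a::ring_1) ^ n"
proof (induction n)
  case (Suc n)
  have "(1 - v) * (\<Sum>i<Suc n. v ^ i) = (1 - v) * (\<Sum>i<n. v ^ i) + (1 - v) * v ^ n"
    by (simp add: distrib_left)
  also have "\<dots> = 1 - v ^ Suc n" using Suc by (simp add: algebra_simps)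
  finally show ?case .
qed simp

lemma left_inverse_power:
  assumes "v * u = (1::'a::monoid_mult)"
  shows "v ^ k * u ^ k = 1"
proof (induction k)
  case (Suc k)
  have "v ^ Suc k * u ^ Suc k = v ^ k * (v * u) * u ^ k"
    by (simp only: power_Suc2[of v] power_Suc[of u] mult.assoc)
  then show ?case using Suc assms by simp
qed simp

lemma norm_power_le_one: "norm x \<le> 1 \<Longrightarrow> norm ((x::'a::real_normed_algebra_1) ^ k) \<le> 1"
  using norm_power_ineq[of x k] power_le_one[OF norm_ge_zero] order_trans by blast

lemma norm_mult_le_left:
  fixes a b :: "'a::real_normed_algebra"
  shows "norm b \<le> 1 \<Longrightarrow> norm (a * b) \<le> norm a"
  using norm_mult_ineq[of a b] mult_left_le[of "norm b" "norm a"] by simp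

lemma norm_mult_le_right:
  fixes a b :: "'a::real_normed_algebra"
  shows "norm a \<le> 1 \<Longrightarrow> norm (a * b) \<le> norm b"
  using norm_mult_ineq[of a b] mult_left_le_one_le[of "norm b" "norm a"] by simp

lemma norm_sandwich_le:
  fixes a b z :: "'a::real_normed_algebra"
  shows "norm a \<le> 1 \<Longrightarrow> norm b \<le> 1 \<Longrightarrow> norm (a * z * b) \<le> norm z"
  using norm_mult_le_left[of b "a * z"] norm_mult_le_right[of a z] by simp

lemma norm_unitary: "unitary_el (u::'a::cstar_algebra) \<Longrightarrow> norm u = 1"
  using cstar_identity[of u] norm_ge_zero[of u] by (auto simp: unitary_el_def power2_eq_1_iff)

lemma unitary_adj: "unitary_el (u::'a::cstar_algebra) \<Longrightarrow> unitary_el (adj u)"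
  by (simp add: unitary_el_def adj_adj)

definition inv_el :: "'a::cstar_algebra \<Rightarrow> 'a" where
  "inv_el x = (SOME y. x * y = 1 \<and> y * x = 1)"

lemma inv_el_inverse: "invertible_el x \<Longrightarrow> x * inv_el x = 1 \<and> inv_el x * x = 1"
  unfolding inv_el_def invertible_el_def by (rule someI_ex)

lemma invertible_one: "invertible_el (1::'a::cstar_algebra)"
  unfolding invertible_el_def by auto

lemma invertible_cscale:
  "a \<noteq> 0 \<Longrightarrow> invertible_el x \<Longrightarrow> invertible_el (cscale a (x::'a::cstar_algebra))"
  unfolding invertible_el_def
proof (elim exE conjE)
  fix b assume "a \<noteq> 0" "x * b = 1" "b * x = 1"
  then show "\<exists>z. cscale a x * z = 1 \<and> z * cscale a x = 1"
    by (intro exI[of _ "cscale (1/a) b"])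
      (simp add: cscale_mult_left cscale_mult_right cscale_cscale cscale_one)
qed

lemma invertible_uminus_iff: "invertible_el (- x) \<longleftrightarrow> invertible_el (x::'a::cstar_algebra)"
  unfolding invertible_el_def by (metis minus_minus mult_minus_left mult_minus_right)

lemma spectrum_between_0_1:
  assumes "between_0_1 (c::'a::cstar_algebra)"
  shows "spectrum c \<subseteq> complex_of_real ` {0..1}"
proof
  fix z assume z: "z \<in> spectrum c"
  with assms obtain r where r: "z = complex_of_real r" "r \<ge> 0"
    unfolding between_0_1_def positive_el_def by auto
  have "cscale (1 - z) 1 - (1 - c) = - (cscale z 1 - c)"
    by (simp add: cscale_diff_left cscale_one)
  then have "1 - z \<in> spectrum (1 - c)"
    using z unfolding spectrum_def by (metis invertible_uminus_iff mem_Collect_eq)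
  with assms obtain s where "1 - z = complex_of_real s" "s \<ge> 0"
    unfolding between_0_1_def positive_el_def by auto
  with r have "r \<le> 1"
    by (metis diff_ge_0_iff_ge of_real_1 of_real_diff of_real_eq_iff)
  with r show "z \<in> complex_of_real ` {0..1}" by auto
qed

lemma invertible_one_minus_cscale_between_0_1:
  assumes "between_0_1 (c::'a::cstar_algebra)" and "cmod l < 1"
  shows "invertible_el (1 - cscale l c)"
proof (cases "l = 0")
  case True
  then show ?thesis by (simp add: cscale_zero_left invertible_one)
next
  case False
  have "cmod (1 / l) > 1" using False assms(2) by (simp add: norm_divide)
  then have "1 / l \<notin> spectrum c" using spectrum_between_0_1[OF assms(1)] by auto
  then have "invertible_el (cscale l (cscale (1 / l) 1 - c))"
    using False by (intro invertible_cscale) (auto simp: spectrum_def)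
  moreover have "cscale l (cscale (1 / l) 1 - c) = 1 - cscale l c"
    using False by (simp add: cscale_diff_right cscale_cscale cscale_one)
  ultimately show ?thesis by simp
qed

section \<open>Roots of unity\<close>

definition unit_root :: "nat \<Rightarrow> complex" where
  "unit_root n = cis (2 * pi / real n)"

lemma norm_unit_root_power [simp]: "cmod (unit_root n ^ k) = 1"
  by (simp add: unit_root_def norm_power)

lemma unit_root_power_power_n: "n > 0 \<Longrightarrow> (unit_root n ^ k) ^ n = 1"
proof -
  assume "n > 0"
  then have "real (k * n) * (2 * pi / real n) = 2 * pi * real k" by (simp add: field_simps)
  moreover have "(unit_root n ^ k) ^ n = unit_root n ^ (k * n)" by (simp add: power_mult)
  moreover have "unit_root n ^ (k * n) = cis (real (k * n) * (2 * pi / real n))"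
    by (simp only: unit_root_def Complex.DeMoivre)
  ultimately show ?thesis by simp
qed

lemma unit_root_power_ne_1:
  assumes "0 < i" "i < n"
  shows "unit_root n ^ i \<noteq> 1"
proof
  assume "unit_root n ^ i = 1"
  then have "cis (real i * (2 * pi / real n)) = 1"
    by (simp only: unit_root_def Complex.DeMoivre)
  then have "cos (real i * (2 * pi / real n)) = 1"
    by (metis cis.sel(1) one_complex.sel(1))
  then obtain m :: int where "real i * (2 * pi / real n) = m * 2 * pi"
    by (auto simp: cos_one_2pi_int)
  then have "real i = m * real n" using assms by (simp add: field_simps)
  then have "int i = m * int n" by (metis of_int_eq_iff of_int_mult of_int_of_nat_eq)
  moreover have "0 < int i" "int i < int n" using assms by simp_all
  ultimately have "0 < m * int n" "m * int n < int n" by linarith+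
  then have "1 \<le> m" by (simp add: zero_less_mult_iff)
  then have "int n \<le> m * int n" using mult_right_mono[of 1 m "int n"] by simp
  with \<open>m * int n < int n\<close> show False by simp
qed

lemma sum_unit_root_powers:
  assumes "0 < i" "i < n"
  shows "(\<Sum>k<n. (unit_root n ^ k) ^ i) = 0"
proof -
  have "(unit_root n ^ i) ^ n = 1"
    using unit_root_power_power_n[of n i] assms by (simp add: power_mult[symmetric] mult.commute)
  then have "(\<Sum>k<n. (unit_root n ^ i) ^ k) = 0"
    using unit_root_power_ne_1[OF assms] by (simp add: geometric_sum)
  then show ?thesis by (simp add: power_mult[symmetric] mult.commute)
qed

text \<open>Summing over the rotations cscale (unit_root n ^ k) w kills every power of w but the zeroth.\<close>
lemma sum_geometric_rotations:
  fixes w :: "'a::cstar_algebra"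
  assumes n: "n > 0"
  shows "(\<Sum>k<n. \<Sum>i<n. cscale (unit_root n ^ k) w ^ i) = of_nat n"
proof -
  define F where "F i = cscale (\<Sum>k<n. (unit_root n ^ k) ^ i) (w ^ i)" for i
  have "(\<Sum>k<n. \<Sum>i<n. cscale (unit_root n ^ k) w ^ i) = (\<Sum>i<n. F i)"
    by (subst sum.swap) (simp add: F_def cscale_power cscale_sum_left)
  also have "\<dots> = F 0 + (\<Sum>i\<in>{..<n} - {0}. F i)"
    using n by (intro sum.remove) auto
  also have "(\<Sum>i\<in>{..<n} - {0}. F i) = 0"
    by (intro sum.neutral) (auto simp: F_def sum_unit_root_powers cscale_zero_left)
  also have "F 0 = real n *\<^sub>R 1" using cscale_of_real[of "real n" 1] by (simp add: F_def)
  also have "\<dots> = of_nat n" by (metis of_real_def of_real_of_nat_eq)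
  finally show ?thesis by simp
qed

lemma norm_average_le:
  fixes f :: "nat \<Rightarrow> 'a::real_normed_vector"
  assumes "n > 0" and "\<And>k. k < n \<Longrightarrow> norm (f k) \<le> B"
  shows "norm ((1 / real n) *\<^sub>R (\<Sum>k<n. f k)) \<le> B"
proof -
  have "norm ((1 / real n) *\<^sub>R (\<Sum>k<n. f k)) \<le> (1 / real n) * (\<Sum>k<n. norm (f k))"
    by (simp add: divide_right_mono norm_sum)
  also have "\<dots> \<le> (1 / real n) * (\<Sum>k<n. B)"
    using assms by (intro mult_left_mono sum_mono) auto
  also have "\<dots> = B" using assms(1) by simp
  finally show ?thesis .
qed

section \<open>Rickart's spectral radius argument\<close>

lemma power_mult_tendsto_zero_below:
  fixes a :: "nat \<Rightarrow> real"
  assumes bound: "\<forall>\<^sub>F n in sequentially. s ^ n * a n \<le> 1/2"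
    and nonneg: "\<And>n. 0 \<le> a n" and r: "0 \<le> r" "r < s"
  shows "(\<lambda>n. r ^ n * a n) \<longlonglongrightarrow> 0"
proof (rule Lim_null_comparison)
  have s: "0 < s" using r by linarith
  show "\<forall>\<^sub>F n in sequentially. norm (r ^ n * a n) \<le> (r / s) ^ n * (1/2)"
    using bound
  proof eventually_elim
    case (elim n)
    have "norm (r ^ n * a n) = (r / s) ^ n * (s ^ n * a n)"
      using s r nonneg by (simp add: power_divide)
    also have "\<dots> \<le> (r / s) ^ n * (1/2)"
      using elim r s by (intro mult_left_mono) auto
    finally show ?case .
  qed
  show "(\<lambda>n. (r / s) ^ n * (1/2)) \<longlonglongrightarrow> 0"
    using r s by (intro tendsto_mult_left_zero LIMSEQ_power_zero) auto
qed

locale disc_resolvent =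
  fixes y :: "'a::cstar_algebra"
  assumes invertible_on_disc: "cmod l \<le> 1 \<Longrightarrow> invertible_el (1 - cscale l y)"
begin

definition resolvent :: "complex \<Rightarrow> 'a" where
  "resolvent l = inv_el (1 - cscale l y)"

lemma resolvent_inverse:
  assumes "cmod l \<le> 1"
  shows "resolvent l * (1 - cscale l y) = 1" "(1 - cscale l y) * resolvent l = 1"
  using inv_el_inverse[OF invertible_on_disc[OF assms]] by (simp_all add: resolvent_def)

lemma resolvent_identity:
  assumes "cmod l \<le> 1" "cmod m \<le> 1"
  shows "resolvent l - resolvent m = resolvent l * cscale (l - m) y * resolvent m"
proof -
  have "resolvent l * cscale (l - m) y * resolvent m
      = resolvent l * ((1 - cscale m y) - (1 - cscale l y)) * resolvent m"
    by (simp add: cscale_diff_left)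
  also have "\<dots> = resolvent l * ((1 - cscale m y) * resolvent m)
      - (resolvent l * (1 - cscale l y)) * resolvent m"
    by (simp add: right_diff_distrib left_diff_distrib mult.assoc)
  also have "\<dots> = resolvent l - resolvent m" using resolvent_inverse assms by simp
  finally show ?thesis by simp
qed

lemma norm_resolvent_diff_le:
  assumes "cmod l \<le> 1" "cmod m \<le> 1"
  shows "norm (resolvent l - resolvent m)
    \<le> cmod (l - m) * norm y * norm (resolvent l) * norm (resolvent m)"
proof -
  have "norm (resolvent l - resolvent m)
      \<le> norm (resolvent l * cscale (l - m) y) * norm (resolvent m)"
    unfolding resolvent_identity[OF assms] by (rule norm_mult_ineq)
  also have "\<dots> \<le> norm (resolvent l) * norm (cscale (l - m) y) * norm (resolvent m)"
    by (intro mult_right_mono norm_mult_ineq) simp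
  finally show ?thesis by (simp add: norm_cscale mult_ac)
qed

lemma norm_resolvent_le_twice:
  assumes "cmod l \<le> 1" "cmod m \<le> 1" and small: "cmod (l - m) * norm y * norm (resolvent m) \<le> 1/2"
  shows "norm (resolvent l) \<le> 2 * norm (resolvent m)"
proof -
  have "norm (resolvent l) \<le> norm (resolvent m) + norm (resolvent l - resolvent m)"
    by (metis add.commute diff_add_cancel norm_triangle_ineq)
  also have "norm (resolvent l - resolvent m)
      \<le> (cmod (l - m) * norm y * norm (resolvent m)) * norm (resolvent l)"
    using norm_resolvent_diff_le[OF assms(1,2)] by (simp add: mult_ac)
  also have "\<dots> \<le> 1/2 * norm (resolvent l)" using small by (intro mult_right_mono) auto
  finally show ?thesis by simp
qed

lemma continuous_on_resolvent: "continuous_on (cball 0 1) resolvent"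
  unfolding continuous_on_def
proof
  fix m :: complex assume m: "m \<in> cball 0 1"
  define K where "K = norm y * norm (resolvent m)"
  have dist0: "((\<lambda>l. cmod (l - m)) \<longlongrightarrow> 0) (at m within cball 0 1)"
    by (rule tendsto_norm_zero, rule LIM_zero, rule tendsto_ident_at)
  have "\<forall>\<^sub>F l in at m within cball 0 1. cmod (l - m) * K < 1/2"
    using order_tendstoD(2)[OF tendsto_mult_left_zero[OF dist0, of K], of "1/2"] by simp
  moreover have "\<forall>\<^sub>F l in at m within cball 0 1. l \<in> cball 0 1"
    unfolding eventually_at_filter by (simp add: always_eventually)
  ultimately have "\<forall>\<^sub>F l in at m within cball 0 1.
      norm (resolvent l - resolvent m) \<le> cmod (l - m) * (2 * K * norm (resolvent m))"
  proof eventually_elim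
    case (elim l)
    then have l: "cmod l \<le> 1" and lm: "cmod (l - m) * norm y * norm (resolvent m) \<le> 1/2"
      by (auto simp: K_def mult.assoc)
    have "norm (resolvent l - resolvent m)
        \<le> cmod (l - m) * norm y * norm (resolvent l) * norm (resolvent m)"
      using norm_resolvent_diff_le l m by simp
    also have "\<dots> \<le> cmod (l - m) * norm y * (2 * norm (resolvent m)) * norm (resolvent m)"
      using norm_resolvent_le_twice[OF l _ lm] m by (intro mult_right_mono mult_left_mono) auto
    finally show ?case by (simp add: K_def mult_ac)
  qed
  then have "((\<lambda>l. resolvent l - resolvent m) \<longlongrightarrow> 0) (at m within cball 0 1)"
    by (rule Lim_null_comparison) (intro tendsto_mult_left_zero dist0)
  then show "(resolvent \<longlongrightarrow> resolvent m) (at m within cball 0 1)"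
    by (rule LIM_zero_cancel)
qed

lemma bounded_resolvent: "\<exists>M>0. \<forall>l. cmod l \<le> 1 \<longrightarrow> norm (resolvent l) \<le> M"
proof -
  have "compact (resolvent ` cball 0 1)"
    by (intro compact_continuous_image continuous_on_resolvent) simp
  then obtain M where "M > 0" "\<And>x. x \<in> resolvent ` cball 0 1 \<Longrightarrow> norm x \<le> M"
    by (meson compact_imp_bounded bounded_pos)
  then show ?thesis by auto
qed

lemma lipschitz_resolvent:
  "\<exists>L\<ge>0. \<forall>l m. cmod l \<le> 1 \<longrightarrow> cmod m \<le> 1 \<longrightarrow>
     norm (resolvent l - resolvent m) \<le> L * cmod (l - m)"
proof -
  obtain M where M: "M > 0" "\<And>l. cmod l \<le> 1 \<Longrightarrow> norm (resolvent l) \<le> M"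
    using bounded_resolvent by blast
  have "norm (resolvent l - resolvent m) \<le> (norm y * M * M) * cmod (l - m)"
    if "cmod l \<le> 1" "cmod m \<le> 1" for l m
  proof -
    have "norm (resolvent l - resolvent m)
        \<le> cmod (l - m) * norm y * norm (resolvent l) * norm (resolvent m)"
      using norm_resolvent_diff_le that by simp
    also have "\<dots> \<le> cmod (l - m) * norm y * M * M"
      using M that by (intro mult_mono) auto
    finally show ?thesis by (simp add: mult_ac)
  qed
  then show ?thesis using M by (intro exI[of _ "norm y * M * M"]) auto
qed

definition avg_resolvent :: "nat \<Rightarrow> complex \<Rightarrow> 'a" where
  "avg_resolvent n l = (1 / real n) *\<^sub>R (\<Sum>k<n. resolvent (unit_root n ^ k * l))"

lemma avg_resolvent_inverse:
  assumes n: "n > 0" and l: "cmod l \<le> 1"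
  shows "avg_resolvent n l * (1 - cscale l y ^ n) = 1"
proof -
  define w where "w = cscale l y"
  have "resolvent (unit_root n ^ k * l) * (1 - w ^ n) = (\<Sum>i<n. cscale (unit_root n ^ k) w ^ i)" for k
  proof -
    have rot: "cscale (unit_root n ^ k * l) y = cscale (unit_root n ^ k) w"
      by (simp add: w_def cscale_cscale)
    have "cscale (unit_root n ^ k) w ^ n = w ^ n"
      by (simp add: cscale_power unit_root_power_power_n[OF n] cscale_one)
    then have "1 - w ^ n
        = (1 - cscale (unit_root n ^ k * l) y) * (\<Sum>i<n. cscale (unit_root n ^ k) w ^ i)"
      by (simp add: rot one_diff_mult_sum_powers)
    then have "resolvent (unit_root n ^ k * l) * (1 - w ^ n)
        = (resolvent (unit_root n ^ k * l) * (1 - cscale (unit_root n ^ k * l) y))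
          * (\<Sum>i<n. cscale (unit_root n ^ k) w ^ i)"
      by (simp only: mult.assoc)
    moreover have "cmod (unit_root n ^ k * l) \<le> 1" using l by (simp add: norm_mult)
    ultimately show ?thesis by (simp add: resolvent_inverse)
  qed
  then have "avg_resolvent n l * (1 - w ^ n)
      = (1 / real n) *\<^sub>R (\<Sum>k<n. \<Sum>i<n. cscale (unit_root n ^ k) w ^ i)"
    by (simp add: avg_resolvent_def sum_distrib_right)
  also have "\<dots> = (1 / real n) *\<^sub>R (real n *\<^sub>R 1)"
    by (simp add: sum_geometric_rotations[OF n] of_real_def[symmetric])
  also have "\<dots> = 1" using n by simp
  finally show ?thesis by (simp only: w_def)
qed

lemma bounded_avg_resolvent: "\<exists>M>0. \<forall>n>0. \<forall>l. cmod l \<le> 1 \<longrightarrow> norm (avg_resolvent n l) \<le> M"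
proof -
  obtain M where M: "M > 0" "\<And>l. cmod l \<le> 1 \<Longrightarrow> norm (resolvent l) \<le> M"
    using bounded_resolvent by blast
  have "norm (avg_resolvent n l) \<le> M" if "n > 0" "cmod l \<le> 1" for n l
    unfolding avg_resolvent_def using that
    by (intro norm_average_le M(2)) (auto simp: norm_mult)
  then show ?thesis using M(1) by blast
qed

lemma lipschitz_avg_resolvent:
  "\<exists>L\<ge>0. \<forall>n>0. \<forall>l m. cmod l \<le> 1 \<longrightarrow> cmod m \<le> 1 \<longrightarrow>
     norm (avg_resolvent n l - avg_resolvent n m) \<le> L * cmod (l - m)"
proof -
  obtain L where L: "L \<ge> 0" "\<And>l m. cmod l \<le> 1 \<Longrightarrow> cmod m \<le> 1 \<Longrightarrow>
      norm (resolvent l - resolvent m) \<le> L * cmod (l - m)"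
    using lipschitz_resolvent by blast
  have "norm (avg_resolvent n l - avg_resolvent n m) \<le> L * cmod (l - m)"
    if "n > 0" "cmod l \<le> 1" "cmod m \<le> 1" for n l m
  proof -
    have "avg_resolvent n l - avg_resolvent n m
        = (1 / real n) *\<^sub>R (\<Sum>k<n. resolvent (unit_root n ^ k * l) - resolvent (unit_root n ^ k * m))"
      by (simp add: avg_resolvent_def sum_subtractf scaleR_diff_right)
    also have "norm \<dots> \<le> L * cmod (l - m)"
    proof (rule norm_average_le[OF \<open>n > 0\<close>])
      fix k
      have "norm (resolvent (unit_root n ^ k * l) - resolvent (unit_root n ^ k * m))
          \<le> L * cmod (unit_root n ^ k * l - unit_root n ^ k * m)"
        using that by (intro L(2)) (auto simp: norm_mult)
      also have "cmod (unit_root n ^ k * l - unit_root n ^ k * m) = cmod (l - m)"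
        by (simp add: right_diff_distrib[symmetric] norm_mult)
      finally show "norm (resolvent (unit_root n ^ k * l) - resolvent (unit_root n ^ k * m))
          \<le> L * cmod (l - m)" .
    qed
    finally show ?thesis .
  qed
  then show ?thesis using L(1) by blast
qed

lemma norm_avg_resolvent_diff_one_le:
  assumes "n > 0" "cmod l \<le> 1"
  shows "norm (avg_resolvent n l - 1) \<le> norm (avg_resolvent n l) * norm (cscale l y ^ n)"
proof -
  have "avg_resolvent n l - 1 = avg_resolvent n l * cscale l y ^ n"
    using avg_resolvent_inverse[OF assms] by (simp add: right_diff_distrib algebra_simps)
  then show ?thesis by (simp add: norm_mult_ineq)
qed

lemma norm_cscale_power_le_half:
  assumes "n > 0" "cmod l \<le> 1" and close: "norm (avg_resolvent n l - 1) \<le> 1/3"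
  shows "norm (cscale l y ^ n) \<le> 1/2"
proof -
  define W where "W = cscale l y ^ n"
  have "W = (avg_resolvent n l - 1) * (1 - W)"
    using avg_resolvent_inverse[OF assms(1,2)] by (simp add: W_def algebra_simps)
  then have "norm W \<le> norm (avg_resolvent n l - 1) * norm (1 - W)"
    by (metis norm_mult_ineq)
  also have "\<dots> \<le> 1/3 * (1 + norm W)"
    using close norm_triangle_ineq4[of 1 W] by (intro mult_mono) auto
  finally show ?thesis by (simp add: W_def)
qed

lemma eventually_avg_resolvent_close_one:
  assumes r: "0 \<le> r" "r \<le> 1" and decay: "(\<lambda>n. r ^ n * norm (y ^ n)) \<longlonglongrightarrow> 0"
  shows "\<forall>\<^sub>F n in sequentially. norm (avg_resolvent n (complex_of_real r) - 1) \<le> 1/6"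
proof -
  obtain M where M: "M > 0" "\<And>n l. n > 0 \<Longrightarrow> cmod l \<le> 1 \<Longrightarrow> norm (avg_resolvent n l) \<le> M"
    using bounded_avg_resolvent by blast
  have "\<forall>\<^sub>F n in sequentially. M * (r ^ n * norm (y ^ n)) < 1/6"
    using decay by (intro order_tendstoD(2)) (auto intro: tendsto_mult_right_zero)
  then show ?thesis using eventually_gt_at_top[of 0]
  proof eventually_elim
    case (elim n)
    have rD: "cmod (complex_of_real r) \<le> 1" using r by auto
    have "norm (avg_resolvent n (complex_of_real r) - 1)
        \<le> M * norm (cscale (complex_of_real r) y ^ n)"
      using norm_avg_resolvent_diff_one_le[OF _ rD] M(2)[OF _ rD] elim
      by (meson mult_right_mono norm_ge_zero order_trans)
    also have "\<dots> = M * (r ^ n * norm (y ^ n))" using r by (simp add: norm_cscale_of_real_power)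
    finally show ?case using elim by linarith
  qed
qed

lemma eventually_le_half_extends:
  "\<exists>\<delta>>0. \<forall>s t. 0 \<le> s \<longrightarrow> 0 \<le> t \<longrightarrow> t \<le> 1 \<longrightarrow> t < s + \<delta> \<longrightarrow>
     (\<forall>\<^sub>F n in sequentially. s ^ n * norm (y ^ n) \<le> 1/2) \<longrightarrow>
     (\<forall>\<^sub>F n in sequentially. t ^ n * norm (y ^ n) \<le> 1/2)"
proof -
  obtain L where L: "L \<ge> 0" "\<And>n l m. n > 0 \<Longrightarrow> cmod l \<le> 1 \<Longrightarrow> cmod m \<le> 1 \<Longrightarrow>
      norm (avg_resolvent n l - avg_resolvent n m) \<le> L * cmod (l - m)"
    using lipschitz_avg_resolvent by blast
  define \<delta> where "\<delta> = 1 / (12 * (L + 1))"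
  have \<delta>: "\<delta> > 0" "L * \<delta> \<le> 1/12" using L(1) by (auto simp: \<delta>_def field_simps)
  have "\<forall>\<^sub>F n in sequentially. t ^ n * norm (y ^ n) \<le> 1/2"
    if s: "0 \<le> s" "\<forall>\<^sub>F n in sequentially. s ^ n * norm (y ^ n) \<le> 1/2"
      and t: "0 \<le> t" "t \<le> 1" "t < s + \<delta>" for s t
  proof -
    txt \<open>Compare t with r \<le> s, whose powers decay, through the Lipschitz bound.\<close>
    define r where "r = max 0 (t - \<delta>)"
    have r: "0 \<le> r" "r \<le> 1" "\<bar>t - r\<bar> \<le> \<delta>" using t \<delta> by (auto simp: r_def)
    have "(\<lambda>n. r ^ n * norm (y ^ n)) \<longlonglongrightarrow> 0"
    proof (cases "r = 0")
      case True
      have "\<forall>\<^sub>F n in sequentially. r ^ n * norm (y ^ n) = 0"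
        using True by (auto intro: eventually_sequentiallyI[of 1])
      then show ?thesis by (rule tendsto_eventually)
    next
      case False
      then have "r < s" using t by (auto simp: r_def)
      then show ?thesis using power_mult_tendsto_zero_below[OF s(2) norm_ge_zero r(1)] by blast
    qed
    from eventually_avg_resolvent_close_one[OF r(1,2) this] show ?thesis
      using eventually_gt_at_top[of 0]
    proof eventually_elim
      case (elim n)
      let ?t = "complex_of_real t" and ?r = "complex_of_real r"
      have tD: "cmod ?t \<le> 1" and rD: "cmod ?r \<le> 1" using t r by auto
      have "norm (avg_resolvent n ?t - avg_resolvent n ?r) \<le> L * cmod (?t - ?r)"
        using elim by (intro L(2) tD rD) simp
      also have "\<dots> \<le> L * \<delta>"
        using r L(1) by (intro mult_left_mono) (auto simp flip: of_real_diff)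
      finally have "norm (avg_resolvent n ?t - 1) \<le> 1/3"
        using elim \<delta> norm_triangle_ineq[of "avg_resolvent n ?t - avg_resolvent n ?r" "avg_resolvent n ?r - 1"]
        by simp
      then have "norm (cscale ?t y ^ n) \<le> 1/2" using elim by (intro norm_cscale_power_le_half tD) simp
      then show ?case using t by (simp add: norm_cscale_of_real_power)
    qed
  qed
  then show ?thesis using \<delta>(1) by blast
qed

lemma eventually_norm_power_le_half: "\<forall>\<^sub>F n in sequentially. norm (y ^ n) \<le> 1/2"
proof -
  obtain \<delta> where \<delta>: "\<delta> > 0"
    and step: "\<And>s t. 0 \<le> s \<Longrightarrow> 0 \<le> t \<Longrightarrow> t \<le> 1 \<Longrightarrow> t < s + \<delta> \<Longrightarrow>
      \<forall>\<^sub>F n in sequentially. s ^ n * norm (y ^ n) \<le> 1/2 \<Longrightarrow>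
      \<forall>\<^sub>F n in sequentially. t ^ n * norm (y ^ n) \<le> 1/2"
    using eventually_le_half_extends by blast
  have reach: "\<forall>\<^sub>F n in sequentially. t ^ n * norm (y ^ n) \<le> 1/2"
    if "0 \<le> t" "t \<le> 1" "t \<le> real j * \<delta> / 2" for j t
    using that
  proof (induction j arbitrary: t)
    case 0
    then show ?case by (auto intro!: eventually_sequentiallyI[of 1] simp: power_0_left)
  next
    case (Suc j)
    define s where "s = min t (real j * \<delta> / 2)"
    have "0 \<le> s" "s \<le> t" "s \<le> real j * \<delta> / 2" using Suc.prems \<delta> by (auto simp: s_def)
    then have s_bound: "\<forall>\<^sub>F n in sequentially. s ^ n * norm (y ^ n) \<le> 1/2"
      using Suc.prems by (intro Suc.IH) auto
    have "t < s + \<delta>"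
    proof (cases "t \<le> real j * \<delta> / 2")
      case True
      then show ?thesis using \<delta> by (simp add: s_def)
    next
      case False
      then have "s = real j * \<delta> / 2" by (simp add: s_def)
      moreover have "real (Suc j) * \<delta> / 2 = real j * \<delta> / 2 + \<delta> / 2" by (simp add: field_simps)
      ultimately show ?thesis using Suc.prems(3) \<delta> by linarith
    qed
    from step[OF \<open>0 \<le> s\<close> Suc.prems(1,2) this s_bound] show ?case .
  qed
  obtain j :: nat where "2 / \<delta> \<le> real j" using real_arch_simple by blast
  then have "1 \<le> real j * \<delta> / 2" using \<delta> by (simp add: field_simps)
  then show ?thesis using reach[of 1 j] by simp
qed

end

lemma norm_le_one_if_between_0_1:
  assumes "between_0_1 (c::'a::cstar_algebra)"
  shows "norm c \<le> 1"
proof (rule ccontr)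
  assume "\<not> norm c \<le> 1"
  define \<rho> where "\<rho> = (1 + norm c) / 2"
  have \<rho>: "1 < \<rho>" "\<rho> < norm c" using \<open>\<not> norm c \<le> 1\<close> by (auto simp: \<rho>_def)
  define y where "y = cscale (complex_of_real (1 / \<rho>)) c"
  interpret disc_resolvent y
  proof
    fix l :: complex assume "cmod l \<le> 1"
    then have "cmod (l / complex_of_real \<rho>) < 1" using \<rho> by (simp add: norm_divide)
    moreover have "cscale l y = cscale (l / complex_of_real \<rho>) c"
      by (simp add: y_def cscale_cscale divide_inverse)
    ultimately show "invertible_el (1 - cscale l y)"
      using invertible_one_minus_cscale_between_0_1[OF assms] by simp
  qed
  obtain N where N: "\<And>n. n \<ge> N \<Longrightarrow> norm (y ^ n) \<le> 1/2"
    using eventually_norm_power_le_half by (auto simp: eventually_sequentially)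
  have "adj y = y"
    using assms by (simp add: y_def adj_cscale between_0_1_def positive_el_def)
  then have "norm (y ^ (2 ^ N)) = norm y ^ (2 ^ N)" by (rule norm_power_two_power_self_adjoint)
  moreover have "norm y > 1" using \<rho> by (simp add: y_def norm_cscale norm_divide field_simps)
  then have "1 \<le> norm y ^ (2 ^ N)" by (intro one_le_power) simp
  moreover have "N \<le> 2 ^ N" using less_exp[of N] by simp
  ultimately show False using N[of "2 ^ N"] by linarith
qed

section \<open>Almost shifted orthogonal towers\<close>

locale unitary_shift_tower =
  fixes u :: "'a::cstar_algebra" and c :: "nat \<Rightarrow> 'a" and n :: nat and \<epsilon> :: real
  assumes unitary: "unitary_el u"
    and norm_le_one: "j \<le> n \<Longrightarrow> norm (c j) \<le> 1"
    and orthogonal: "j \<le> n \<Longrightarrow> k \<le> n \<Longrightarrow> j \<noteq> k \<Longrightarrow> c j * c k = 0"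
    and shift: "j < n \<Longrightarrow> norm (u * c j * adj u - c (Suc j)) \<le> \<epsilon>"
begin

lemma norm_powers_le_one: "norm (u ^ k) \<le> 1" "norm (adj u ^ k) \<le> 1"
  by (simp_all add: norm_power_le_one norm_unitary unitary unitary_adj)

lemma adj_power_mult_power: "adj u ^ k * u ^ k = 1"
  using unitary by (intro left_inverse_power) (simp add: unitary_el_def)

lemma norm_conj_power_diff_le:
  "j + i \<le> n \<Longrightarrow> norm (u ^ i * c j * adj u ^ i - c (j + i)) \<le> real i * \<epsilon>"
proof (induction i)
  case (Suc i)
  define X where "X = u ^ i * c j * adj u ^ i"
  have "u ^ Suc i * c j * adj u ^ Suc i = u * X * adj u"
    by (simp only: X_def power_Suc[of u i] power_Suc2[of "adj u" i] mult.assoc)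
  then have "u ^ Suc i * c j * adj u ^ Suc i - c (j + Suc i)
      = u * (X - c (j + i)) * adj u + (u * c (j + i) * adj u - c (Suc (j + i)))"
    by (simp add: algebra_simps)
  then have "norm (u ^ Suc i * c j * adj u ^ Suc i - c (j + Suc i))
      \<le> norm (u * (X - c (j + i)) * adj u) + norm (u * c (j + i) * adj u - c (Suc (j + i)))"
    by (metis norm_triangle_ineq)
  also have "\<dots> \<le> real i * \<epsilon> + \<epsilon>"
  proof (rule add_mono)
    show "norm (u * (X - c (j + i)) * adj u) \<le> real i * \<epsilon>"
      using norm_sandwich_le[OF norm_powers_le_one(1)[of 1] norm_powers_le_one(2)[of 1]] Suc
      by (simp add: X_def) (meson order_trans)
    show "norm (u * c (j + i) * adj u - c (Suc (j + i))) \<le> \<epsilon>"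
      using shift Suc.prems by simp
  qed
  finally show ?case by (simp add: distrib_right)
qed simp

lemma norm_sandwich_power_le_of_le:
  assumes "j \<le> n" "k \<le> j" "1 \<le> k"
  shows "norm (c j * u ^ k * c j) \<le> real k * \<epsilon>"
proof -
  define X where "X = u ^ k * c (j - k) * adj u ^ k"
  have "X * (u ^ k * c j) = u ^ k * (c (j - k) * c j)"
    by (simp add: X_def mult.assoc adj_power_mult_power flip: mult.assoc[of "adj u ^ k"])
  also have "c (j - k) * c j = 0" using orthogonal assms by simp
  finally have "c j * u ^ k * c j = (c j - X) * (u ^ k * c j)"
    by (simp add: algebra_simps)
  also have "norm \<dots> \<le> norm (c j - X)"
    using norm_mult_le_right[OF norm_powers_le_one(1), of k "c j"] norm_le_one[OF assms(1)]
    by (intro norm_mult_le_left) simp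
  also have "\<dots> \<le> real k * \<epsilon>"
    using norm_conj_power_diff_le[of "j - k" k] assms by (simp add: X_def norm_minus_commute)
  finally show ?thesis .
qed

lemma norm_sandwich_power_le_of_less:
  assumes "j < k" "k \<le> n"
  shows "norm (c j * u ^ k * c j) \<le> real k * \<epsilon>"
proof -
  define p where "p = k - j"
  have jp: "j + p = k" using assms by (simp add: p_def)
  define Y where "Y = u ^ j * c 0 * adj u ^ j"
  define X where "X = u ^ p * c j * adj u ^ p"
  have Xu: "X * u ^ p = u ^ p * c j" by (simp add: X_def mult.assoc adj_power_mult_power)
  have Yu: "Y * (u ^ j * z) = u ^ j * (c 0 * z)" for z
    by (simp add: Y_def mult.assoc adj_power_mult_power flip: mult.assoc[of "adj u ^ j"])
  have c0X: "c 0 * X = c 0 * (X - c k)"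
    using orthogonal[of 0 k] assms by (simp add: right_diff_distrib)
  have "c j * u ^ k * c j = ((c j - Y) + Y) * u ^ j * (X * u ^ p)"
    by (simp add: Xu jp[symmetric] power_add mult.assoc)
  also have "\<dots> = (c j - Y) * (u ^ j * X * u ^ p) + Y * (u ^ j * (X * u ^ p))"
    by (simp only: distrib_right mult.assoc)
  also have "Y * (u ^ j * (X * u ^ p)) = u ^ j * (c 0 * X) * u ^ p"
    by (simp add: Yu mult.assoc)
  also have "\<dots> = u ^ j * (c 0 * (X - c k)) * u ^ p"
    by (simp only: c0X)
  finally have "norm (c j * u ^ k * c j)
      \<le> norm ((c j - Y) * (u ^ j * X * u ^ p)) + norm (u ^ j * (c 0 * (X - c k)) * u ^ p)"
    by (metis norm_triangle_ineq)
  also have "\<dots> \<le> norm (c j - Y) + norm (X - c k)"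
  proof (rule add_mono)
    have "norm X \<le> 1"
      using norm_sandwich_le[OF norm_powers_le_one, of p "c j" p] norm_le_one[of j] assms
      by (simp add: X_def)
    then show "norm ((c j - Y) * (u ^ j * X * u ^ p)) \<le> norm (c j - Y)"
      using norm_sandwich_le[OF norm_powers_le_one(1) norm_powers_le_one(1), of j X p]
      by (intro norm_mult_le_left) simp
    show "norm (u ^ j * (c 0 * (X - c k)) * u ^ p) \<le> norm (X - c k)"
      using norm_sandwich_le[OF norm_powers_le_one(1) norm_powers_le_one(1), of j "c 0 * (X - c k)" p]
        norm_mult_le_right[OF norm_le_one[of 0], of "X - c k"]
      by simp
  qed
  also have "\<dots> \<le> real j * \<epsilon> + real p * \<epsilon>"
    using norm_conj_power_diff_le[of 0 j] norm_conj_power_diff_le[of j p] jp assms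
    by (intro add_mono) (simp_all add: Y_def X_def norm_minus_commute)
  also have "\<dots> = real k * \<epsilon>" using jp by (simp flip: distrib_right)
  finally show ?thesis .
qed

lemma norm_sandwich_power_le:
  assumes "j \<le> n" "1 \<le> k" "k \<le> n"
  shows "norm (c j * u ^ k * c j) \<le> real k * \<epsilon>"
  using assms norm_sandwich_power_le_of_le norm_sandwich_power_le_of_less
  by (cases "k \<le> j") auto

end

theorem lemma2p2:
  fixes A :: "'a::cstar_algebra set" and \<alpha> :: "'a \<Rightarrow> 'a" and u :: 'a
    and c :: "nat \<Rightarrow> 'a" and n :: nat and \<epsilon> :: real
  assumes "unital_cstar_subalgebra A" and "separable_set A"
    and "star_automorphism A \<alpha>"
    and "unitary_el u" and "\<forall>a\<in>A. u * a * adj u = \<alpha> a"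
    and "\<epsilon> > 0"
    and "\<forall>j\<le>n. c j \<in> A \<and> between_0_1 (c j)"
    and "\<forall>j\<le>n. \<forall>k\<le>n. j \<noteq> k \<longrightarrow> c j * c k = 0"
    and "\<forall>j<n. norm (\<alpha> (c j) - c (Suc j)) < \<epsilon>"
  shows "\<forall>j\<le>n. \<forall>k\<in>{1..n}.
           norm (c j * adj u ^ k * c j) < 3 * real n * \<epsilon> \<and>
           norm (c j * u ^ k * c j) < 3 * real n * \<epsilon>"
proof -
  interpret unitary_shift_tower u c n \<epsilon>
  proof
    show "norm (c j) \<le> 1" if "j \<le> n" for j
      using assms(7) that norm_le_one_if_between_0_1 by blast
    show "norm (u * c j * adj u - c (Suc j)) \<le> \<epsilon>" if "j < n" for j
      using assms(5,7,9) that by (simp add: less_imp_le)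
  qed (use assms(4,8) in auto)
  show ?thesis
  proof (intro allI impI ballI conjI)
    fix j k assume j: "j \<le> n" and "k \<in> {1..n}"
    then have k: "1 \<le> k" "k \<le> n" by auto
    have "real k * \<epsilon> \<le> real n * \<epsilon>" using k assms(6) by (intro mult_right_mono) auto
    also have "\<dots> < 3 * real n * \<epsilon>" using k assms(6) by simp
    finally have bound: "norm (c j * u ^ k * c j) < 3 * real n * \<epsilon>"
      using norm_sandwich_power_le[OF j k] by linarith
    then show "norm (c j * u ^ k * c j) < 3 * real n * \<epsilon>" .
    have "adj (c j) = c j"
      using assms(7) j by (simp add: between_0_1_def positive_el_def)
    then have "adj (c j * u ^ k * c j) = c j * adj u ^ k * c j"
      by (simp add: adj_mult adj_power mult.assoc)
    then show "norm (c j * adj u ^ k * c j) < 3 * real n * \<epsilon>"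
      using bound by (metis norm_adj)
  qed
qed

end
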